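(* Let $K=\mathbb{F}_2(t)$, so that the completion at the infinite place is $K_{t^{-1}}=\mathbb{F}_2((t^{-1}))$. Write $y\in K_{t^{-1}}$ as $y=\sum_{i\le N}a_it^i$ with $N\in\mathbb{Z}$ and $a_i\in\mathbb{F}_2$, setting $a_i=0$ for $i>N$. Then the conic $C_y: x_0^2+x_0x_1+yx_1^2=tx_2^2$ has a $K_{t^{-1}}$-point if and only if $a_0=0$. *)

theory Defs
  imports "HOL-Library.Z2" "HOL-Computational_Algebra.Formal_Laurent_Series"
begin

end

theory Submission
  imports Defs "HOL-Library.Disjoint_Sets"
begin

(* With u = t^-1 as the series variable, squaring over F_2 is the Frobenius: A^2 has the
   coefficient A_m at u^(2m) and nothing at odd exponents, while t Z^2 lives on odd exponents
   only. Hence x0^2 = t x2^2 has only the trivial solution, the conic has a point iff the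
   Artin-Schreier equation X^2 + X + y = t Z^2 is solvable, and the series of the form t Z^2 are
   exactly those whose even coefficients vanish. The coefficient of u^(2m) in X^2 + X + y is
   X_m + X_(2m) + y_(2m): for m = 0 it is y_0, and for m ~= 0 the equations
   X_m + X_(2m) = y_(2m) are solved recursively along the chains m, 2m, 4m, ... *)

unbundle fps_syntax

lemma bit_fls_square_nth:
  fixes A :: "bit fls"
  shows "(A^2) $$ n = (if even n then A $$ (n div 2) else 0)"
proof -
  define d where "d = fls_subdegree A"
  define I where "I = {d..n - d}"
  have "(A^2) $$ n = (\<Sum>i\<in>I. A $$ i * A $$ (n - i))"
    unfolding power2_eq_square I_def d_def by (rule fls_times_nth(2))
  also have "\<dots> = (\<Sum>i\<in>I \<inter> {i. 2 * i = n}. A $$ i * A $$ (n - i))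
                 + (\<Sum>i\<in>I - {i. 2 * i = n}. A $$ i * A $$ (n - i))"
    by (rule sum.Int_Diff) (simp add: I_def)
  also have "(\<Sum>i\<in>I - {i. 2 * i = n}. A $$ i * A $$ (n - i)) = 0"
    \<comment> \<open>the terms for \<open>i\<close> and \<open>n - i\<close> cancel in characteristic 2\<close>
    by (rule sum_involution_eq_0[where h = "\<lambda>i. n - i"]) (auto simp: I_def mult.commute)
  also have "(\<Sum>i\<in>I \<inter> {i. 2 * i = n}. A $$ i * A $$ (n - i))
             = (if even n then A $$ (n div 2) else 0)"
  proof (cases "even n")
    case True
    then obtain m where m: "n = 2 * m" by blast
    show ?thesis
    proof (cases "d \<le> m")
      case True
      then have "I \<inter> {i. 2 * i = n} = {m}" using m by (auto simp: I_def)
      then show ?thesis using m by simp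
    next
      case False
      then have "I \<inter> {i. 2 * i = n} = {}" using m by (auto simp: I_def)
      then show ?thesis using m False by (simp add: d_def)
    qed
  next
    case False
    then have "I \<inter> {i. 2 * i = n} = {}" by auto
    then show ?thesis using False by simp
  qed
  finally show ?thesis by simp
qed

lemma bit_fls_X_inv_times_square_nth:
  fixes B :: "bit fls"
  shows "(fls_X_inv * B^2) $$ n = (if odd n then B $$ ((n + 1) div 2) else 0)"
  by (simp add: fls_X_inv_times_conv_shift bit_fls_square_nth)

lemma bit_fls_X_inv_times_square_iff:
  fixes W :: "bit fls"
  shows "(\<exists>Z. W = fls_X_inv * Z^2) \<longleftrightarrow> (\<forall>m. W $$ (2 * m) = 0)"
proof
  assume "\<exists>Z. W = fls_X_inv * Z^2"
  then show "\<forall>m. W $$ (2 * m) = 0" by (auto simp: bit_fls_X_inv_times_square_nth)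
next
  assume even_zero: "\<forall>m. W $$ (2 * m) = 0"
  define Z where "Z = Abs_fls (\<lambda>j. W $$ (2 * j - 1))"
  have Z_nth: "Z $$ j = W $$ (2 * j - 1)" for j
    unfolding Z_def
    by (rule nth_Abs_fls_lower_bound[of "min 0 (fls_subdegree W)"]) simp
  have "W $$ n = (fls_X_inv * Z^2) $$ n" for n
    using even_zero
    by (cases "even n") (auto simp: bit_fls_X_inv_times_square_nth Z_nth add.commute elim!: oddE)
  then show "\<exists>Z. W = fls_X_inv * Z^2" by (auto simp: fls_eq_iff)
qed

lemma bit_fls_square_eq_X_inv_times_square:
  fixes A B :: "bit fls"
  assumes "A^2 = fls_X_inv * B^2"
  shows "A = 0 \<and> B = 0"
proof -
  have "A $$ m = 0" for m
    using arg_cong[OF assms, of "\<lambda>F. F $$ (2 * m)"]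
    by (simp add: bit_fls_square_nth bit_fls_X_inv_times_square_nth)
  then have "A = 0" by (simp add: fls_eq_iff)
  then have "fls_X_inv * B^2 = 0" using assms by simp
  then have "B = 0" by simp
  then show ?thesis using \<open>A = 0\<close> by simp
qed

(* For m > 0 the recursion halves m until it is odd; for m < 0 it doubles m until 2m leaves the
   support of y. *)
function artin_schreier_coeff :: "bit fls \<Rightarrow> int \<Rightarrow> bit" where
  "artin_schreier_coeff y n =
     (if 0 < n then (if odd n then 0 else y $$ n + artin_schreier_coeff y (n div 2))
      else if n = 0 \<or> 2 * n < fls_subdegree y then 0
      else y $$ (2 * n) + artin_schreier_coeff y (2 * n))"
  by auto
termination
  by (relation "measure (\<lambda>(y, n). if 0 < n then nat n else nat (n - fls_subdegree y))") auto

declare artin_schreier_coeff.simps [simp del]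

lemma artin_schreier_coeff_double:
  assumes "m \<noteq> 0"
  shows "artin_schreier_coeff y m + artin_schreier_coeff y (2 * m) = y $$ (2 * m)"
proof (cases "0 < m")
  case True
  then show ?thesis by (auto simp: artin_schreier_coeff.simps[of y "2 * m"])
next
  case False
  then show ?thesis
    using assms
    by (auto simp: artin_schreier_coeff.simps[of y m] artin_schreier_coeff.simps[of y "2 * m"])
qed

lemma artin_schreier_coeff_eq_0_below:
  "n < min 0 (fls_subdegree y) \<Longrightarrow> artin_schreier_coeff y n = 0"
  by (simp add: artin_schreier_coeff.simps)

lemma bit_fls_artin_schreier_even_coeffs:
  fixes y :: "bit fls"
  assumes "y $$ 0 = 0"
  shows "\<exists>X. \<forall>m. (X^2 + X + y) $$ (2 * m) = 0"
proof
  define X where "X = Abs_fls (artin_schreier_coeff y)"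
  have X_nth: "X $$ n = artin_schreier_coeff y n" for n
    unfolding X_def
    by (rule nth_Abs_fls_lower_bound[of "min 0 (fls_subdegree y)"])
       (simp add: artin_schreier_coeff_eq_0_below)
  show "\<forall>m. (X^2 + X + y) $$ (2 * m) = 0"
  proof
    fix m :: int
    have "(X^2 + X + y) $$ (2 * m)
          = (artin_schreier_coeff y m + artin_schreier_coeff y (2 * m)) + y $$ (2 * m)"
      by (simp only: fls_plus_nth bit_fls_square_nth X_nth) simp
    also have "\<dots> = 0"
      using assms artin_schreier_coeff_double[of m y]
      by (cases "m = 0") simp_all
    finally show "(X^2 + X + y) $$ (2 * m) = 0" .
  qed
qed

lemma bit_fls_artin_schreier_eq_X_inv_times_square_iff:
  fixes y :: "bit fls"
  shows "(\<exists>X Z. X^2 + X + y = fls_X_inv * Z^2) \<longleftrightarrow> y $$ 0 = 0"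
proof
  assume "\<exists>X Z. X^2 + X + y = fls_X_inv * Z^2"
  then obtain X where "\<forall>m. (X^2 + X + y) $$ (2 * m) = 0"
    using bit_fls_X_inv_times_square_iff by metis
  then have "(X^2 + X + y) $$ (2 * 0) = 0" by blast
  then show "y $$ 0 = 0" by (simp add: bit_fls_square_nth)
next
  assume "y $$ 0 = 0"
  then show "\<exists>X Z. X^2 + X + y = fls_X_inv * Z^2"
    using bit_fls_artin_schreier_even_coeffs bit_fls_X_inv_times_square_iff by metis
qed

lemma conic_nontrivial_point_iff_affine:
  fixes y c :: "'a::field"
  assumes anisotropic: "\<And>a b. a^2 = c * b^2 \<Longrightarrow> a = 0 \<and> b = 0"
  shows "(\<exists>x0 x1 x2. (x0, x1, x2) \<noteq> (0, 0, 0) \<and> x0^2 + x0 * x1 + y * x1^2 = c * x2^2)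
         \<longleftrightarrow> (\<exists>X Z. X^2 + X + y = c * Z^2)"
proof
  assume "\<exists>x0 x1 x2. (x0, x1, x2) \<noteq> (0, 0, 0) \<and> x0^2 + x0 * x1 + y * x1^2 = c * x2^2"
  then obtain x0 x1 x2 where nontrivial: "(x0, x1, x2) \<noteq> (0, 0, 0)"
    and eq: "x0^2 + x0 * x1 + y * x1^2 = c * x2^2" by blast
  have "x1 \<noteq> 0"
    using nontrivial eq anisotropic[of x0 x2] by auto
  then have "(x0 / x1)^2 + x0 / x1 + y = c * (x2 / x1)^2"
    using eq by (simp add: field_simps power2_eq_square)
  then show "\<exists>X Z. X^2 + X + y = c * Z^2" by blast
next
  assume "\<exists>X Z. X^2 + X + y = c * Z^2"
  then obtain X Z where "X^2 + X + y = c * Z^2" by blast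
  then have "(X, 1 :: 'a, Z) \<noteq> (0, 0, 0) \<and> X^2 + X * 1 + y * 1^2 = c * Z^2" by simp
  then show "\<exists>x0 x1 x2. (x0, x1, x2) \<noteq> (0, 0, 0) \<and> x0^2 + x0 * x1 + y * x1^2 = c * x2^2"
    by blast
qed

theorem lemma3p7:
  fixes y :: "bit fls"
  shows "(\<exists>x0 x1 x2 :: bit fls. (x0, x1, x2) \<noteq> (0, 0, 0) \<and>
            x0^2 + x0 * x1 + y * x1^2 = fls_X_inv * x2^2)
         \<longleftrightarrow> fls_nth y 0 = 0"
  using conic_nontrivial_point_iff_affine[OF bit_fls_square_eq_X_inv_times_square]
        bit_fls_artin_schreier_eq_X_inv_times_square_iff
  by simp

end
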